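(* Let $\mathcal{G}=(\mathcal{V},\mathcal{E})$ be a DAG with treatment $A$ and outcome $Y$ as in the context, and $\mathcal{G}'=\mathcal{G}\setminus(A\to Y)$. Let $I\subseteq\mathcal{I}$ be a set of irrelevant variables, $Z\subseteq\mathcal{V}\setminus\{A,Y\}$, and $U\subseteq\mathcal{W}$ a set of extended confounding variables such that $Z\cup I\cup U$ is $(Z\cup I)$-irreducible for estimating $\tau$. Then in $\mathcal{G}'$: (i) $A\perp_{\mathcal{G}'}Y\mid Z\cup I\cup U$; (ii) $A\perp_{\mathcal{G}'}Y\mid Z\cup U$; hence $Z\cup I\cup U$ and $Z\cup U$ are valid adjustment sets. In $\mathcal{G}$: (a) $I\perp_{\mathcal{G}}Y\mid A\cup Z\cup U$; (b) $I\perp_{\mathcal{G}}U\mid Z$.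
   Context: $\mathcal{G}=(\mathcal{V},\mathcal{E})$ is a DAG containing treatment $A$ and outcome $Y$ with an edge $A\to Y$; variables follow a linear Gaussian SEM Markov and faithful to $\mathcal{G}$; no variable of $\mathcal{V}\setminus\{A,Y\}$ is a descendant of $A$. $\perp_{\mathcal{H}}$ denotes d-separation in graph $\mathcal{H}$. $\tau=\frac{\partial}{\partial a}E\{Y\mid do(A=a)\}$. A set $Z\subseteq\mathcal{V}\setminus\{A,Y\}$ is a valid adjustment set if the OLS estimator of the $A$-coefficient when regressing $Y$ on $A$ and $Z$ is unbiased for $\tau$ for every distribution Markov to $\mathcal{G}$ (equivalently here, $A\perp_{\mathcal{G}'}Y\mid Z$). For $K\subseteq Z$, a valid set $Z$ is $K$-irreducible if no proper subset $Z'\subsetneq Z$ with $K\subseteq Z'$ is valid. Irrelevant variables $\mathcal{I}$: $V\in\mathcal{V}\setminus\{A,Y\}$ such that in $\mathcal{G}'$, $V$ is d-separated from $Y$ given every $K\subseteq\mathcal{V}\setminus\{A,Y\}$. Extended confounding variables $\mathcal{W}$: $V\in\mathcal{V}\setminus\{A,Y\}$ d-connected in $\mathcal{G}'$ to $A$ given some $K\subseteq\mathcal{V}\setminus\{A,Y\}$ and to $Y$ given some $L\subseteq\mathcal{V}\setminus\{A,Y\}$. *)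

theory Defs
  imports Main
begin

definition dag :: "'v set \<Rightarrow> ('v \<times> 'v) set \<Rightarrow> bool" where
  "dag V E \<longleftrightarrow> finite V \<and> E \<subseteq> V \<times> V \<and> acyclic E"

definition adjacent :: "('v \<times> 'v) set \<Rightarrow> 'v \<Rightarrow> 'v \<Rightarrow> bool" where
  "adjacent E u v \<longleftrightarrow> (u, v) \<in> E \<or> (v, u) \<in> E"

definition is_path :: "'v set \<Rightarrow> ('v \<times> 'v) set \<Rightarrow> 'v list \<Rightarrow> bool" where
  "is_path V E p \<longleftrightarrow> p \<noteq> [] \<and> distinct p \<and> set p \<subseteq> V \<and>
     (\<forall>i. Suc i < length p \<longrightarrow> adjacent E (p ! i) (p ! Suc i))"

definition descendants :: "('v \<times> 'v) set \<Rightarrow> 'v \<Rightarrow> 'v set" where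
  "descendants E v = {w. (v, w) \<in> E\<^sup>*}"

definition collider :: "('v \<times> 'v) set \<Rightarrow> 'v list \<Rightarrow> nat \<Rightarrow> bool" where
  "collider E p i \<longleftrightarrow> (p ! (i - 1), p ! i) \<in> E \<and> (p ! Suc i, p ! i) \<in> E"

definition active_path :: "('v \<times> 'v) set \<Rightarrow> 'v set \<Rightarrow> 'v list \<Rightarrow> bool" where
  "active_path E Z p \<longleftrightarrow>
     (\<forall>i. 0 < i \<and> Suc i < length p \<longrightarrow>
        (if collider E p i then descendants E (p ! i) \<inter> Z \<noteq> {} else p ! i \<notin> Z))"

definition d_sep :: "'v set \<Rightarrow> ('v \<times> 'v) set \<Rightarrow> 'v set \<Rightarrow> 'v set \<Rightarrow> 'v set \<Rightarrow> bool" where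
  "d_sep V E X Y Z \<longleftrightarrow>
     \<not> (\<exists>p. is_path V E p \<and> hd p \<in> X \<and> last p \<in> Y \<and> active_path E Z p)"

definition edges' :: "('v \<times> 'v) set \<Rightarrow> 'v \<Rightarrow> 'v \<Rightarrow> ('v \<times> 'v) set" where
  "edges' E A Y = E - {(A, Y)}"

definition valid_adj :: "'v set \<Rightarrow> ('v \<times> 'v) set \<Rightarrow> 'v \<Rightarrow> 'v \<Rightarrow> 'v set \<Rightarrow> bool" where
  "valid_adj V E A Y Z \<longleftrightarrow> Z \<subseteq> V - {A, Y} \<and> d_sep V (edges' E A Y) {A} {Y} Z"

definition irreducible :: "'v set \<Rightarrow> ('v \<times> 'v) set \<Rightarrow> 'v \<Rightarrow> 'v \<Rightarrow> 'v set \<Rightarrow> 'v set \<Rightarrow> bool" where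
  "irreducible V E A Y K Z \<longleftrightarrow> K \<subseteq> Z \<and> valid_adj V E A Y Z \<and>
     (\<forall>Z'. K \<subseteq> Z' \<and> Z' \<subset> Z \<longrightarrow> \<not> valid_adj V E A Y Z')"

definition irrelevant_vars :: "'v set \<Rightarrow> ('v \<times> 'v) set \<Rightarrow> 'v \<Rightarrow> 'v \<Rightarrow> 'v set" where
  "irrelevant_vars V E A Y = {v \<in> V - {A, Y}.
     \<forall>K. K \<subseteq> V - {A, Y} \<longrightarrow> d_sep V (edges' E A Y) {v} {Y} K}"

definition ext_confounding_vars :: "'v set \<Rightarrow> ('v \<times> 'v) set \<Rightarrow> 'v \<Rightarrow> 'v \<Rightarrow> 'v set" where
  "ext_confounding_vars V E A Y = {v \<in> V - {A, Y}.
     (\<exists>K. K \<subseteq> V - {A, Y} \<and> \<not> d_sep V (edges' E A Y) {v} {A} K) \<and>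
     (\<exists>L. L \<subseteq> V - {A, Y} \<and> \<not> d_sep V (edges' E A Y) {v} {Y} L)}"

end

(* Because A has the single child Y and Y has no children, A becomes a sink once the edge
   A -> Y is deleted, and the deletion changes descendant sets only by Y. Each claim is then
   proved by path surgery: an active path is cut at a vertex, re-rooted along a directed path,
   or made active by conditioning on its own colliders. *)

theory Submission
  imports Defs
begin

definition unblocked_at :: "('v \<times> 'v) set \<Rightarrow> 'v set \<Rightarrow> 'v list \<Rightarrow> nat \<Rightarrow> bool" where
  "unblocked_at E K p i \<longleftrightarrow>
     (if collider E p i then descendants E (p ! i) \<inter> K \<noteq> {} else p ! i \<notin> K)"

lemma active_path_iff_unblocked_at:
  "active_path E K p \<longleftrightarrow> (\<forall>i. 0 < i \<longrightarrow> Suc i < length p \<longrightarrow> unblocked_at E K p i)"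
  by (auto simp: active_path_def unblocked_at_def)

lemma is_path_drop:
  assumes "is_path V E p" "k < length p"
  shows "is_path V E (drop k p)"
  using assms by (auto simp: is_path_def dest: in_set_dropD)

lemma is_path_Cons:
  assumes "is_path V E p" "x \<in> V" "x \<notin> set p" "adjacent E x (hd p)"
  shows "is_path V E (x # p)"
  using assms by (auto simp: is_path_def nth_Cons hd_conv_nth split: nat.split)

lemma nth_ne_last:
  assumes "distinct p" "Suc i < length p"
  shows "p ! i \<noteq> last p"
proof -
  have "p \<noteq> []" using assms(2) by auto
  then show ?thesis using assms by (simp add: last_conv_nth nth_eq_iff_index_eq)
qed

lemma unblocked_at_drop:
  assumes "0 < i" "Suc (k + i) < length p"
  shows "unblocked_at E K (drop k p) i = unblocked_at E K p (k + i)"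
  using assms by (simp add: unblocked_at_def collider_def)

lemma active_path_dropI:
  assumes "k < length p" "\<And>s. k < s \<Longrightarrow> Suc s < length p \<Longrightarrow> unblocked_at E K p s"
  shows "active_path E K (drop k p)"
  using assms by (auto simp: active_path_iff_unblocked_at unblocked_at_drop)

lemma active_path_drop:
  assumes "active_path E K p" "k < length p"
  shows "active_path E K (drop k p)"
  using assms by (intro active_path_dropI) (auto simp: active_path_iff_unblocked_at)

lemma unblocked_at_Cons:
  assumes "0 < j"
  shows "unblocked_at E K (x # q) (Suc j) = unblocked_at E K q j"
  using assms by (cases j) (simp_all add: unblocked_at_def collider_def)

lemma active_path_Cons:
  assumes "active_path E K q" "q \<noteq> []" "(x, hd q) \<notin> E" "hd q \<notin> K"
  shows "active_path E K (x # q)"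
  unfolding active_path_iff_unblocked_at
proof (intro allI impI)
  fix i assume i: "0 < i" "Suc i < length (x # q)"
  show "unblocked_at E K (x # q) i"
  proof (cases "i = 1")
    case True
    then show ?thesis
      using assms(2-4) by (simp add: unblocked_at_def collider_def hd_conv_nth)
  next
    case False
    then obtain j where "i = Suc j" "0 < j" using i(1) by (cases i) auto
    then show ?thesis
      using assms(1) i(2) by (simp add: unblocked_at_Cons active_path_iff_unblocked_at)
  qed
qed

lemma acyclic_not_sym:
  assumes "acyclic E" "(x, y) \<in> E"
  shows "(y, x) \<notin> E"
  using assms by (meson acyclic_def r_into_trancl trancl_into_trancl)

lemma descendants_mono_edge:
  assumes "(x, y) \<in> E"
  shows "descendants E y \<subseteq> descendants E x"
  using assms by (auto simp: descendants_def intro: converse_rtrancl_into_rtrancl)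

text \<open>An active path may be re-rooted along a directed path x \<rightarrow>* a whose start has no
  descendant in K: each step either cuts the path at the next vertex or prepends it, the new
  first edge pointing away from the old start.\<close>
lemma active_path_from_descendant:
  assumes "acyclic E" "E \<subseteq> V \<times> V" "(x, a) \<in> E\<^sup>*" "descendants E x \<inter> K = {}"
    and "is_path V E q" "hd q = x" "active_path E K q"
  shows "\<exists>q'. is_path V E q' \<and> hd q' = a \<and> last q' = last q \<and> active_path E K q'"
  using assms(3-)
proof (induction arbitrary: q rule: converse_rtrancl_induct)
  case base
  then show ?case by blast
next
  case (step x x')
  have desc': "descendants E x' \<inter> K = {}"
    using descendants_mono_edge[OF step.hyps(1)] step.prems(1) by blast
  show ?case
  proof (cases "x' \<in> set q")
    case True
    then obtain k where k: "k < length q" "q ! k = x'" by (auto simp: in_set_conv_nth)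
    have "is_path V E (drop k q)" "hd (drop k q) = x'" "active_path E K (drop k q)"
      using is_path_drop[OF step.prems(2) k(1)] active_path_drop[OF step.prems(4) k(1)] k
      by (simp_all add: hd_drop_conv_nth)
    with step.IH[OF desc', of "drop k q"] show ?thesis using k(1) by auto
  next
    case False
    have q: "q \<noteq> []" using step.prems(2) by (simp add: is_path_def)
    have "x \<notin> K" using step.prems(1) by (auto simp: descendants_def)
    then have "active_path E K (x' # q)"
      using active_path_Cons[OF step.prems(4) q] acyclic_not_sym[OF assms(1) step.hyps(1)]
        step.prems(3) by simp
    moreover have "is_path V E (x' # q)"
      using is_path_Cons[OF step.prems(2) _ False] step.hyps(1) step.prems(3) assms(2)
      by (auto simp: adjacent_def)
    ultimately show ?thesis using step.IH[OF desc', of "x' # q"] q by auto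
  qed
qed

text \<open>The last blocked vertex t of p is a collider with a directed path to a; cutting p at t
  and re-rooting at a gives an active path from a.\<close>
lemma active_path_or_ancestor_collider:
  assumes "acyclic E" "E \<subseteq> V \<times> V" "is_path V E p"
    and "\<And>i. 0 < i \<Longrightarrow> Suc i < length p \<Longrightarrow>
           unblocked_at E K p i \<or> (collider E p i \<and> (p ! i, a) \<in> E\<^sup>*)"
  shows "active_path E K p \<or>
         (\<exists>q. is_path V E q \<and> hd q = a \<and> last q = last p \<and> active_path E K q)"
proof (cases "active_path E K p")
  case False
  define blocked where "blocked = {i. 0 < i \<and> Suc i < length p \<and> \<not> unblocked_at E K p i}"
  define t where "t = Max blocked"
  have "finite blocked" "blocked \<noteq> {}"
    using False by (auto simp: blocked_def active_path_iff_unblocked_at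
        intro: finite_subset[of _ "{..<length p}"])
  then have t: "t \<in> blocked" and t_max: "\<And>s. s \<in> blocked \<Longrightarrow> s \<le> t"
    by (simp_all add: t_def)
  have t_int: "0 < t" "Suc t < length p" and t_col: "collider E p t" "(p ! t, a) \<in> E\<^sup>*"
    and t_desc: "descendants E (p ! t) \<inter> K = {}"
    using t assms(4)[of t] by (auto simp: blocked_def unblocked_at_def)
  have "unblocked_at E K p s" if "t < s" "Suc s < length p" for s
    using t_max[of s] that t_int by (force simp: blocked_def)
  then have "active_path E K (drop t p)"
    using t_int by (intro active_path_dropI) simp_all
  moreover have "is_path V E (drop t p)" using is_path_drop[OF assms(3)] t_int by simp
  ultimately show ?thesis
    using active_path_from_descendant[OF assms(1,2) t_col(2) t_desc, of "drop t p"] t_int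
    by (simp add: hd_drop_conv_nth)
qed simp

lemma active_path_avoids:
  assumes "is_path V E p" "active_path E K p" "hd p \<noteq> w" "last p \<noteq> w"
    and "descendants E w \<inter> K = {}" "\<And>x. (w, x) \<in> E \<Longrightarrow> x \<notin> set p"
  shows "w \<notin> set p"
proof
  assume "w \<in> set p"
  then obtain i where i: "i < length p" "p ! i = w" by (auto simp: in_set_conv_nth)
  have p: "p \<noteq> []" "\<And>j. Suc j < length p \<Longrightarrow> adjacent E (p ! j) (p ! Suc j)"
    using assms(1) by (auto simp: is_path_def)
  have "i \<noteq> 0" using i assms(3) p(1) by (metis hd_conv_nth)
  moreover have "i \<noteq> length p - 1" using i assms(4) p(1) by (metis last_conv_nth)
  ultimately have int: "0 < i" "Suc i < length p" using i(1) by auto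
  have "(w, p ! (i - 1)) \<notin> E" "(w, p ! Suc i) \<notin> E"
    using assms(6)[of "p ! (i - 1)"] assms(6)[of "p ! Suc i"] int by auto
  then have "collider E p i"
    using p(2)[of "i - 1"] p(2)[of i] int i(2) by (auto simp: collider_def adjacent_def)
  then show False
    using assms(2,5) int i(2) by (auto simp: active_path_iff_unblocked_at unblocked_at_def)
qed

lemma collider_edges':
  assumes "p ! i \<noteq> y"
  shows "collider (edges' E a y) p i = collider E p i"
  using assms by (auto simp: collider_def edges'_def)

lemma active_path_mono_disjoint:
  assumes "active_path E K p" "set p \<inter> I = {}"
  shows "active_path E (K \<union> I) p"
  using assms nth_mem[OF Suc_lessD] unfolding active_path_def
  by (fastforce simp: disjoint_iff split: if_splits)

lemma d_sep_remove_separated: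
  assumes "d_sep V E X Y (Z \<union> I)" "\<And>v. v \<in> I \<Longrightarrow> d_sep V E {v} Y Z"
  shows "d_sep V E X Y Z"
  unfolding d_sep_def
proof
  assume "\<exists>p. is_path V E p \<and> hd p \<in> X \<and> last p \<in> Y \<and> active_path E Z p"
  then obtain p where p: "is_path V E p" "hd p \<in> X" "last p \<in> Y" "active_path E Z p" by blast
  show False
  proof (cases "set p \<inter> I = {}")
    case True
    then show False
      using assms(1) p active_path_mono_disjoint[OF p(4)] by (auto simp: d_sep_def)
  next
    case False
    then obtain k where k: "k < length p" "p ! k \<in> I" by (auto simp: in_set_conv_nth)
    then show False
      using assms(2)[OF k(2)] is_path_drop[OF p(1) k(1)] active_path_drop[OF p(4) k(1)] p(3)
      by (auto simp: d_sep_def hd_drop_conv_nth)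
  qed
qed

definition linked_avoiding :: "'v set \<Rightarrow> ('v \<times> 'v) set \<Rightarrow> 'v \<Rightarrow> ('v \<times> 'v) set" where
  "linked_avoiding V E a = {(x, y). x \<in> V - {a} \<and> y \<in> V - {a} \<and> adjacent E x y}"

lemma linked_avoiding_edges': "linked_avoiding V (edges' E a y) a = linked_avoiding V E a"
  by (auto simp: linked_avoiding_def edges'_def adjacent_def)

lemma is_path_linked_avoiding:
  assumes "is_path V E p" "a \<notin> set p"
  shows "(hd p, last p) \<in> (linked_avoiding V E a)\<^sup>*"
proof -
  have p: "p \<noteq> []" "set p \<subseteq> V" "\<And>i. Suc i < length p \<Longrightarrow> adjacent E (p ! i) (p ! Suc i)"
    using assms(1) by (auto simp: is_path_def)
  have "(hd p, p ! k) \<in> (linked_avoiding V E a)\<^sup>*" if "k < length p" for k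
    using that
  proof (induction k)
    case 0
    then show ?case using p(1) by (simp add: hd_conv_nth)
  next
    case (Suc k)
    have "(p ! k, p ! Suc k) \<in> linked_avoiding V E a"
      using p(2,3) Suc.prems assms(2) nth_mem[of k p] nth_mem[of "Suc k" p]
      by (auto simp: linked_avoiding_def)
    with Suc show ?case by (meson Suc_lessD rtrancl_into_rtrancl)
  qed
  then show ?thesis using p(1) by (simp add: last_conv_nth)
qed

lemma linked_avoiding_is_path:
  assumes "(x, y) \<in> (linked_avoiding V E a)\<^sup>*" "y \<in> V - {a}"
  shows "\<exists>p. is_path V E p \<and> hd p = x \<and> last p = y \<and> a \<notin> set p"
  using assms(1)
proof (induction rule: converse_rtrancl_induct)
  case base
  then show ?case using assms(2) by (intro exI[of _ "[y]"]) (auto simp: is_path_def)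
next
  case (step x z)
  then obtain p where p: "is_path V E p" "hd p = z" "last p = y" "a \<notin> set p" by blast
  have x: "x \<in> V - {a}" "adjacent E x z" using step.hyps(1) by (auto simp: linked_avoiding_def)
  show ?case
  proof (cases "x \<in> set p")
    case True
    then obtain k where k: "k < length p" "p ! k = x" by (auto simp: in_set_conv_nth)
    then show ?thesis
      using is_path_drop[OF p(1) k(1)] p(3,4)
      by (intro exI[of _ "drop k p"]) (auto simp: hd_drop_conv_nth dest: in_set_dropD)
  next
    case False
    have "p \<noteq> []" using p(1) by (simp add: is_path_def)
    then show ?thesis
      using is_path_Cons[OF p(1) _ False] x p by (intro exI[of _ "x # p"]) auto
  qed
qed

lemma active_path_given_colliders:
  assumes "is_path V E p"
  shows "active_path E {p ! t |t. 0 < t \<and> Suc t < length p \<and> collider E p t} p"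
proof -
  have "distinct p" using assms by (simp add: is_path_def)
  then show ?thesis
    by (auto simp: active_path_def descendants_def nth_eq_iff_index_eq)
qed

lemma separated_from_all_not_linked:
  assumes "\<forall>K. K \<subseteq> V - {a, y} \<longrightarrow> d_sep V E {v} {y} K" "y \<in> V - {a}"
  shows "(v, y) \<notin> (linked_avoiding V E a)\<^sup>*"
proof
  assume "(v, y) \<in> (linked_avoiding V E a)\<^sup>*"
  then obtain p where p: "is_path V E p" "hd p = v" "last p = y" "a \<notin> set p"
    using linked_avoiding_is_path[OF _ assms(2)] by blast
  define K where "K = {p ! t |t. 0 < t \<and> Suc t < length p \<and> collider E p t}"
  have "distinct p" "set p \<subseteq> V" using p(1) by (auto simp: is_path_def)
  then have "K \<subseteq> V - {a, y}"
    using p(3,4) nth_ne_last by (fastforce simp: K_def)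
  then have "d_sep V E {v} {y} K" using assms(1) by blast
  then show False
    using active_path_given_colliders[OF p(1)] p unfolding K_def d_sep_def by blast
qed

lemma irrelevant_vars_subset: "irrelevant_vars V E A Y \<subseteq> V - {A, Y}"
  unfolding irrelevant_vars_def by (rule Collect_restrict)

lemma irrelevant_vars_d_sep:
  assumes "v \<in> irrelevant_vars V E A Y" "K \<subseteq> V - {A, Y}"
  shows "d_sep V (edges' E A Y) {v} {Y} K"
  using assms by (simp add: irrelevant_vars_def)

lemma ext_confounding_vars_subset: "ext_confounding_vars V E A Y \<subseteq> V - {A, Y}"
  unfolding ext_confounding_vars_def by (rule Collect_restrict)

locale treatment_outcome_dag =
  fixes V :: "'v set" and E :: "('v \<times> 'v) set" and A Y :: 'v
  assumes acyclic: "acyclic E" and edges_in: "E \<subseteq> V \<times> V" and A_Y: "(A, Y) \<in> E"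
    and descendants_A_outside: "\<forall>v \<in> V - {A, Y}. v \<notin> descendants E A"
begin

abbreviation E' :: "('v \<times> 'v) set" where
  "E' \<equiv> edges' E A Y"

lemma Y_in: "Y \<in> V" and A_ne_Y: "A \<noteq> Y"
  using A_Y edges_in acyclic by (auto simp: acyclic_def)

lemma child_of_A:
  assumes "(A, w) \<in> E"
  shows "w = Y"
proof -
  have "w \<in> V" "w \<in> descendants E A" using assms edges_in by (auto simp: descendants_def)
  moreover have "w \<noteq> A" using assms acyclic by (auto simp: acyclic_def)
  ultimately show ?thesis using descendants_A_outside by blast
qed

lemma no_child_of_Y: "(Y, w) \<notin> E"
proof
  assume Yw: "(Y, w) \<in> E"
  then have "w \<in> descendants E A" using A_Y by (simp add: descendants_def)
  moreover have "w \<noteq> Y" "w \<noteq> A" using acyclic_not_sym[OF acyclic A_Y] Yw acyclic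
    by (auto simp: acyclic_def)
  ultimately show False using Yw edges_in descendants_A_outside by blast
qed

lemma descendants_Y: "descendants E Y = {Y}"
  by (auto simp: descendants_def no_child_of_Y elim: converse_rtranclE)

lemma descendants_A: "descendants E A \<subseteq> {A, Y}"
proof
  fix w assume "w \<in> descendants E A"
  then have "(A, w) \<in> E\<^sup>*" by (simp add: descendants_def)
  then show "w \<in> {A, Y}"
  proof (cases rule: converse_rtranclE)
    case (step u)
    then have "w \<in> descendants E Y" using child_of_A by (auto simp: descendants_def)
    then show ?thesis using descendants_Y by simp
  qed simp
qed

lemma no_child_of_A': "(A, w) \<notin> E'"
  using child_of_A by (auto simp: edges'_def)

lemma descendants_A': "descendants E' A = {A}"
  by (auto simp: descendants_def no_child_of_A' elim: converse_rtranclE)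

lemma descendants_subset_insert_Y: "descendants E c \<subseteq> insert Y (descendants E' c)"
proof
  fix w assume "w \<in> descendants E c"
  then have "(c, w) \<in> E\<^sup>*" by (simp add: descendants_def)
  then show "w \<in> insert Y (descendants E' c)"
  proof (induction rule: rtrancl_induct)
    case (step u w)
    then show ?case
      using no_child_of_Y by (cases "(u, w) = (A, Y)")
        (auto simp: descendants_def edges'_def intro: rtrancl_into_rtrancl)
  qed (simp add: descendants_def)
qed

lemma acyclic': "acyclic E'" and edges_in': "E' \<subseteq> V \<times> V"
  using acyclic_subset[OF acyclic] edges_in by (auto simp: edges'_def)

text \<open>An active path to Y that conditions on A cannot use the edge A \<rightarrow> Y: A would be an
  interior vertex, hence a collider, so Y would have the child A.\<close>
lemma is_path_edges'_to_Y:
  assumes "is_path V E p" "hd p \<noteq> A" "last p = Y" "active_path E K p" "A \<in> K"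
  shows "is_path V E' p"
proof -
  have p: "p \<noteq> []" "distinct p" "\<And>i. Suc i < length p \<Longrightarrow> adjacent E (p ! i) (p ! Suc i)"
    using assms(1) by (auto simp: is_path_def)
  have "adjacent E' (p ! i) (p ! Suc i)" if i: "Suc i < length p" for i
  proof -
    have "p ! i \<noteq> Y" using nth_ne_last[OF p(2) i] assms(3) by simp
    moreover have "p ! Suc i \<noteq> Y" if "p ! i = A"
    proof -
      have "0 < i" using \<open>p ! i = A\<close> assms(2) p(1) by (metis gr0I hd_conv_nth)
      then have "collider E p i"
        using assms(4,5) i \<open>p ! i = A\<close> by (auto simp: active_path_def split: if_splits)
      then show ?thesis using no_child_of_Y \<open>p ! i = A\<close> by (auto simp: collider_def)
    qed
    ultimately show ?thesis using p(3)[OF i] by (auto simp: adjacent_def edges'_def)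
  qed
  then show ?thesis using assms(1) by (simp add: is_path_def)
qed

text \<open>Since descendant sets of G and G' differ only by Y, a collider that is opened in G only
  by conditioning on A is an ancestor of A in G'. An active path from I to Y in G thus yields,
  in G', an active path to Y from I or from A.\<close>
lemma d_sep_irrelevant_outcome:
  assumes I: "I \<subseteq> irrelevant_vars V E A Y" and K: "K \<subseteq> V - {A, Y}"
    and sep: "d_sep V E' {A} {Y} K"
  shows "d_sep V E I {Y} (insert A K)"
  unfolding d_sep_def
proof
  assume "\<exists>p. is_path V E p \<and> hd p \<in> I \<and> last p \<in> {Y} \<and> active_path E (insert A K) p"
  then obtain p where p: "is_path V E p" "hd p \<in> I" "last p = Y" "active_path E (insert A K) p"
    by auto
  have hd_irr: "hd p \<in> irrelevant_vars V E A Y" using I p(2) by (rule subsetD)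
  then have irr: "d_sep V E' {hd p} {Y} K" by (rule irrelevant_vars_d_sep[OF _ K])
  have "hd p \<noteq> A" using irrelevant_vars_subset hd_irr by fastforce
  then have p': "is_path V E' p" using is_path_edges'_to_Y[OF p(1) _ p(3,4)] by simp
  have "unblocked_at E' K p i \<or> (collider E' p i \<and> (p ! i, A) \<in> E'\<^sup>*)"
    if i: "0 < i" "Suc i < length p" for i
  proof -
    have "p ! i \<noteq> Y" using nth_ne_last[OF _ i(2)] p(1,3) by (simp add: is_path_def)
    then have col: "collider E' p i = collider E p i" by (rule collider_edges')
    have "unblocked_at E (insert A K) p i"
      using p(4) i by (simp add: active_path_iff_unblocked_at)
    moreover have "Y \<notin> insert A K" using K A_ne_Y by auto
    ultimately show ?thesis
      using descendants_subset_insert_Y[of "p ! i"] col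
      by (auto simp: unblocked_at_def descendants_def split: if_splits)
  qed
  then have "active_path E' K p \<or>
      (\<exists>q. is_path V E' q \<and> hd q = A \<and> last q = last p \<and> active_path E' K q)"
    by (intro active_path_or_ancestor_collider[OF acyclic' edges_in' p'])
  then show False using irr sep p(3) p' unfolding d_sep_def by auto
qed

text \<open>An active path from I to U avoids Y and A (both would be blocked colliders), so
  together with a path from U to Y in G', which also avoids the sink A of G', it links I to Y
  outside A, which irrelevance forbids.\<close>
lemma d_sep_irrelevant_confounding:
  assumes I: "I \<subseteq> irrelevant_vars V E A Y" and U: "U \<subseteq> ext_confounding_vars V E A Y"
    and Z: "Z \<subseteq> V - {A, Y}"
  shows "d_sep V E I U Z"
  unfolding d_sep_def
proof
  assume "\<exists>p. is_path V E p \<and> hd p \<in> I \<and> last p \<in> U \<and> active_path E Z p"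
  then obtain p where p: "is_path V E p" "hd p \<in> I" "last p \<in> U" "active_path E Z p" by auto
  have hd_irr: "hd p \<in> irrelevant_vars V E A Y" using I p(2) by (rule subsetD)
  have last_conf: "last p \<in> ext_confounding_vars V E A Y" using U p(3) by (rule subsetD)
  have ends: "hd p \<notin> {A, Y}" "last p \<notin> {A, Y}"
    using irrelevant_vars_subset[THEN subsetD, OF hd_irr]
      ext_confounding_vars_subset[THEN subsetD, OF last_conf] by simp_all
  have "descendants E Y \<inter> Z = {}" "descendants E A \<inter> Z = {}"
    using descendants_Y descendants_A Z by auto
  have "Y \<notin> set p"
    by (rule active_path_avoids[OF p(1,4) _ _ \<open>descendants E Y \<inter> Z = {}\<close>])
      (use ends no_child_of_Y in auto)
  have "A \<notin> set p"
    by (rule active_path_avoids[OF p(1,4) _ _ \<open>descendants E A \<inter> Z = {}\<close>])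
      (use ends child_of_A \<open>Y \<notin> set p\<close> in auto)
  then have linked_p: "(hd p, last p) \<in> (linked_avoiding V E A)\<^sup>*"
    by (rule is_path_linked_avoiding[OF p(1)])
  from last_conf obtain L where L: "L \<subseteq> V - {A, Y}" "\<not> d_sep V E' {last p} {Y} L"
    unfolding ext_confounding_vars_def by blast
  then obtain q where q: "is_path V E' q" "hd q = last p" "last q = Y" "active_path E' L q"
    unfolding d_sep_def by blast
  have "descendants E' A \<inter> L = {}" using descendants_A' L(1) by auto
  have "A \<notin> set q"
    by (rule active_path_avoids[OF q(1,4) _ _ \<open>descendants E' A \<inter> L = {}\<close>])
      (use q(2,3) ends A_ne_Y no_child_of_A' in auto)
  then have "(last p, Y) \<in> (linked_avoiding V E' A)\<^sup>*"
    using is_path_linked_avoiding[OF q(1)] q(2,3) by metis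
  then have "(hd p, Y) \<in> (linked_avoiding V E' A)\<^sup>*"
    using linked_p unfolding linked_avoiding_edges' by (rule rtrancl_trans[rotated])
  moreover have "\<forall>K. K \<subseteq> V - {A, Y} \<longrightarrow> d_sep V E' {hd p} {Y} K"
    using irrelevant_vars_d_sep[OF hd_irr] by blast
  ultimately show False
    using separated_from_all_not_linked[of V A Y E' "hd p"] Y_in A_ne_Y by blast
qed

end

theorem lemmaB6:
  fixes V :: "'v set" and E :: "('v \<times> 'v) set" and A Y :: 'v
    and I Z U :: "'v set"
  assumes "dag V E"
    and "A \<in> V" and "Y \<in> V" and "A \<noteq> Y" and "(A, Y) \<in> E"
    and "\<forall>v \<in> V - {A, Y}. v \<notin> descendants E A"
    and "I \<subseteq> irrelevant_vars V E A Y"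
    and "Z \<subseteq> V - {A, Y}"
    and "U \<subseteq> ext_confounding_vars V E A Y"
    and "irreducible V E A Y (Z \<union> I) (Z \<union> I \<union> U)"
  shows "d_sep V (edges' E A Y) {A} {Y} (Z \<union> I \<union> U)
       \<and> d_sep V (edges' E A Y) {A} {Y} (Z \<union> U)
       \<and> valid_adj V E A Y (Z \<union> I \<union> U)
       \<and> valid_adj V E A Y (Z \<union> U)
       \<and> d_sep V E I {Y} ({A} \<union> Z \<union> U)
       \<and> d_sep V E I U Z"
proof -
  interpret treatment_outcome_dag V E A Y
    using assms(1,5,6) by unfold_locales (auto simp: dag_def)
  have valid: "valid_adj V E A Y (Z \<union> I \<union> U)"
    using assms(10) by (simp add: irreducible_def)
  have U: "U \<subseteq> V - {A, Y}"
    using assms(9) ext_confounding_vars_subset by (rule subset_trans)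
  have ZU: "Z \<union> U \<subseteq> V - {A, Y}" using assms(8) U by (rule Un_least)
  have sep_ZU: "d_sep V E' {A} {Y} (Z \<union> U)"
  proof (rule d_sep_remove_separated)
    show "d_sep V E' {A} {Y} (Z \<union> U \<union> I)"
      using valid by (simp add: valid_adj_def Un_ac)
    show "d_sep V E' {v} {Y} (Z \<union> U)" if "v \<in> I" for v
      using assms(7) that ZU by (blast intro: irrelevant_vars_d_sep)
  qed
  have "d_sep V E I {Y} ({A} \<union> Z \<union> U)"
    using d_sep_irrelevant_outcome[OF assms(7) ZU sep_ZU] by simp
  moreover have "d_sep V E I U Z"
    by (rule d_sep_irrelevant_confounding[OF assms(7,9,8)])
  ultimately show ?thesis
    using valid sep_ZU ZU by (simp add: valid_adj_def)
qed

end
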